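(* Let $f:[0,1]\to[0,1]$ be a surjective continuous function. Then $f$ admits a splitting sequence if and only if $f^2=f\circ f$ admits a splitting sequence.
   Context: For a continuous surjective $g:[0,1]\to[0,1]$: a sequence $(T_n)_{n\in\mathbb N}$ of closed intervals $T_n\subsetneq[0,1]$ (possibly degenerate) is tight for $g$ if $g(T_{n+1})=T_n$ for every $n$ and $T_n$ is nondegenerate for all sufficiently large $n$. A tight sequence $(T_n)$, $T_n=[l_n,r_n]$, is a splitting sequence admitted by $g$ if there are an infinite set $N\subseteq\mathbb N$ and nondegenerate closed intervals $S_n\subseteq[0,1]$ ($n\in N$) with $S_n\cap T_n\subseteq\{l_n,r_n\}$ and $g(S_n)=g(T_n)$ for all $n\in N$. *)

theory Defs
  imports "HOL-Analysis.Analysis"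
begin

definition proper_closed_subinterval :: "real \<Rightarrow> real \<Rightarrow> bool" where
  "proper_closed_subinterval l r \<longleftrightarrow>
     l \<le> r \<and> {l..r} \<subseteq> {0..1} \<and> {l..r} \<noteq> {0..1}"

definition tight :: "(real \<Rightarrow> real) \<Rightarrow> (nat \<Rightarrow> real) \<Rightarrow> (nat \<Rightarrow> real) \<Rightarrow> bool" where
  "tight g l r \<longleftrightarrow>
     (\<forall>n. proper_closed_subinterval (l n) (r n)) \<and>
     (\<forall>n. g ` {l (Suc n)..r (Suc n)} = {l n..r n}) \<and>
     (\<exists>m. \<forall>n\<ge>m. l n < r n)"

definition splitting_sequence :: "(real \<Rightarrow> real) \<Rightarrow> (nat \<Rightarrow> real) \<Rightarrow> (nat \<Rightarrow> real) \<Rightarrow> bool" where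
  "splitting_sequence g l r \<longleftrightarrow>
     tight g l r \<and>
     (\<exists>N :: nat set. infinite N \<and>
        (\<forall>n\<in>N. \<exists>a b. a < b \<and> {a..b} \<subseteq> {0..1} \<and>
              {a..b} \<inter> {l n..r n} \<subseteq> {l n, r n} \<and>
              g ` {a..b} = g ` {l n..r n}))"

definition admits_splitting_sequence :: "(real \<Rightarrow> real) \<Rightarrow> bool" where
  "admits_splitting_sequence g \<longleftrightarrow> (\<exists>l r. splitting_sequence g l r)"

end

theory Submission
  imports Defs
begin

text \<open>
  If T is a splitting sequence for f, then one of the subsequences T (2 k + p), p \<in> {0, 1}, still
  contains infinitely many split terms, and it is a splitting sequence for f \<circ> f, since
  f ` S = f ` T implies f ` f ` S = f ` f ` T.

  Conversely, let T be a splitting sequence for f \<circ> f. Interleave the T n with the intermediate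
  images f ` T (n + 1), and choose in this chain intervals W k, each a minimal preimage of the
  previous one: f maps W (k + 1) onto W k and sends no interior point to an endpoint of W k.
  Then W is tight for f. An interval S splitting T (n + 1) for f \<circ> f has f ` f ` S = T n, so
  f ` S contains a minimal preimage Z of the interval W inside T n. If Z differs from the next
  interval W', the two minimal preimages Z and W' meet only in endpoints, so Z splits W'. If
  Z = W', then S contains a minimal preimage of W', and it splits the following interval
  W'' \<subseteq> T (n + 1), because S meets T (n + 1) only in endpoints. So for each of the
  infinitely many split T (n + 1), one of the two intervals after W is split.
\<close>

definition minimal_preimage :: "(real \<Rightarrow> real) \<Rightarrow> real \<Rightarrow> real \<Rightarrow> real \<Rightarrow> real \<Rightarrow> bool" where
  "minimal_preimage f c d a b \<longleftrightarrow>
     a < b \<and> f ` {a..b} = {c..d} \<and> f a \<in> {c, d} \<and> f b \<in> {c, d} \<and> (\<forall>x\<in>{a<..<b}. f x \<notin> {c, d})"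

lemma IVT_min_max:
  fixes f :: "real \<Rightarrow> real"
  assumes "continuous_on {min u v..max u v} f"
  shows "{min (f u) (f v)..max (f u) (f v)} \<subseteq> f ` {min u v..max u v}"
proof -
  have "connected (f ` {min u v..max u v})"
    using assms by (rule connected_continuous_image) simp
  then show ?thesis
    by (rule connected_contains_Icc) (auto simp: min_def max_def)
qed

lemma continuous_image_Icc_eq_if_interior_avoids:
  fixes f :: "real \<Rightarrow> real"
  assumes "a \<le> b" "continuous_on {a..b} f" "c < d" "{f a, f b} = {c, d}"
    and avoids: "\<forall>x\<in>{a<..<b}. f x \<notin> {c, d}"
  shows "f ` {a..b} = {c..d}"
proof
  have between: "{min (f u) (f v)..max (f u) (f v)} \<subseteq> f ` {min u v..max u v}"
    if "u \<in> {a..b}" "v \<in> {a..b}" for u v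
    using assms(2) by (intro IVT_min_max) (rule continuous_on_subset, use that in auto)
  show "{c..d} \<subseteq> f ` {a..b}"
    using between[of a b] assms(1,4) by (auto simp: doubleton_eq_iff)
  show "f ` {a..b} \<subseteq> {c..d}"
  proof (rule image_subsetI, rule ccontr)
    fix x assume x: "x \<in> {a..b}" and "f x \<notin> {c..d}"
    with assms(3,4) have "x \<in> {a<..<b}" by (auto simp: doubleton_eq_iff less_le)
    \<comment> \<open>on the way from x to the endpoint with the opposite value, f crosses c or d\<close>
    have "\<exists>e\<in>{a, b}. \<exists>w\<in>{c, d}. w \<noteq> f e \<and> w \<in> {min (f x) (f e)..max (f x) (f e)}"
    proof (cases "f x < c")
      case True
      have "d \<in> f ` {a, b}" using assms(4) by simp
      then obtain e where "e \<in> {a, b}" "f e = d" by blast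
      moreover have "c \<noteq> f e" "c \<in> {min (f x) (f e)..max (f x) (f e)}"
        using True assms(3) \<open>f e = d\<close> by simp_all
      ultimately show ?thesis by blast
    next
      case False
      have "c \<in> f ` {a, b}" using assms(4) by simp
      then obtain e where "e \<in> {a, b}" "f e = c" by blast
      moreover have "d \<noteq> f e" "d \<in> {min (f x) (f e)..max (f x) (f e)}"
        using False \<open>f x \<notin> {c..d}\<close> \<open>f e = c\<close> assms(3) by simp_all
      ultimately show ?thesis by blast
    qed
    then obtain e w where e: "e \<in> {a, b}" and w: "w \<in> {c, d}" "w \<noteq> f e"
      "w \<in> {min (f x) (f e)..max (f x) (f e)}" by blast
    have "e \<in> {a..b}" using e assms(1) by auto
    with x w(3) between have "w \<in> f ` {min x e..max x e}" by blast
    then obtain y where y: "y \<in> {min x e..max x e}" "f y = w" by blast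
    have "y \<noteq> x" using y(2) w(1) \<open>f x \<notin> {c..d}\<close> assms(3) by auto
    moreover have "y \<noteq> e" using y(2) w(2) by auto
    ultimately have "y \<in> {a<..<b}"
      using y(1) e \<open>x \<in> {a<..<b}\<close> by (auto simp: min_def max_def split: if_splits)
    with avoids y(2) w(1) show False by auto
  qed
qed

lemma minimal_preimage_exists_Icc:
  fixes f :: "real \<Rightarrow> real"
  assumes "p \<le> q" and cont: "continuous_on {p..q} f" and "c < d" and ends: "{f p, f q} = {c, d}"
  obtains a b where "p \<le> a" "b \<le> q" "minimal_preimage f c d a b"
proof -
  \<comment> \<open>b is the first point after p where f takes the value f q, a the last point before b where it takes f p\<close>
  define B where "B = {x\<in>{p..q}. f x = f q}"
  define b where "b = Inf B"
  have "closed B" unfolding B_def using cont by (intro continuous_closed_preimage_constant) auto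
  moreover have "q \<in> B" "bdd_below B" using \<open>p \<le> q\<close> unfolding B_def by (auto intro: bdd_belowI)
  ultimately have "b \<in> B" and b_least: "\<And>x. x \<in> B \<Longrightarrow> b \<le> x"
    unfolding b_def by (auto intro: closed_contains_Inf cInf_lower)
  then have b: "p \<le> b" "b \<le> q" "f b = f q" unfolding B_def by auto
  define A where "A = {x\<in>{p..b}. f x = f p}"
  define a where "a = Sup A"
  have "closed A" unfolding A_def using cont b
    by (intro continuous_closed_preimage_constant) (auto elim: continuous_on_subset)
  moreover have "p \<in> A" "bdd_above A" using b unfolding A_def by (auto intro: bdd_aboveI)
  ultimately have "a \<in> A" and a_greatest: "\<And>x. x \<in> A \<Longrightarrow> x \<le> a"
    unfolding a_def by (auto intro: closed_contains_Sup cSup_upper)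
  then have a: "p \<le> a" "a \<le> b" "f a = f p" unfolding A_def by auto
  have "f p \<noteq> f q" using ends \<open>c < d\<close> by (auto simp: doubleton_eq_iff)
  then have "a < b" using a b by (metis order_le_less)
  have avoids: "\<forall>x\<in>{a<..<b}. f x \<notin> {c, d}"
  proof
    fix x assume "x \<in> {a<..<b}"
    then have "x \<notin> B" "x \<notin> A" using a b a_greatest b_least by force+
    then show "f x \<notin> {c, d}" using \<open>x \<in> {a<..<b}\<close> a b ends unfolding A_def B_def by auto
  qed
  have "continuous_on {a..b} f" using cont by (rule continuous_on_subset) (use a b in auto)
  then have "f ` {a..b} = {c..d}"
    using continuous_image_Icc_eq_if_interior_avoids \<open>a < b\<close> \<open>c < d\<close> a b ends avoids by simp
  then show thesis
    using that[of a b] a b \<open>a < b\<close> ends avoids unfolding minimal_preimage_def by auto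
qed

lemma minimal_preimage_exists:
  fixes f :: "real \<Rightarrow> real"
  assumes "connected S" "continuous_on S f" "c < d" "{c..d} \<subseteq> f ` S"
  obtains a b where "a \<in> S" "b \<in> S" "minimal_preimage f c d a b"
proof -
  have "c \<in> f ` S" "d \<in> f ` S" using assms(3,4) by auto
  then obtain p q where "p \<in> S" "q \<in> S" "f p = c" "f q = d" by blast
  have Icc_sub: "{min p q..max p q} \<subseteq> S"
    using assms(1) \<open>p \<in> S\<close> \<open>q \<in> S\<close> by (intro connected_contains_Icc) (auto simp: min_def max_def)
  have "min p q \<le> max p q" by simp
  moreover have "continuous_on {min p q..max p q} f"
    using assms(2) Icc_sub by (rule continuous_on_subset)
  moreover have "{f (min p q), f (max p q)} = {c, d}"
    using \<open>f p = c\<close> \<open>f q = d\<close> by (auto simp: min_def max_def)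
  ultimately obtain a b where "min p q \<le> a" "b \<le> max p q" "minimal_preimage f c d a b"
    using minimal_preimage_exists_Icc assms(3) by blast
  moreover from this have "a \<le> b" unfolding minimal_preimage_def by simp
  ultimately have "a \<in> S" "b \<in> S" using Icc_sub by auto
  then show thesis using \<open>minimal_preimage f c d a b\<close> by (rule that)
qed

lemma minimal_preimages_Int_subset:
  assumes "minimal_preimage f c d a b" "minimal_preimage f c d a' b'" "(a', b') \<noteq> (a, b)"
  shows "{a'..b'} \<inter> {a..b} \<subseteq> {a, b}"
proof
  fix x assume x: "x \<in> {a'..b'} \<inter> {a..b}"
  have ab: "f a \<in> {c, d}" "f b \<in> {c, d}" "\<forall>x\<in>{a<..<b}. f x \<notin> {c, d}"
    and ab': "f a' \<in> {c, d}" "f b' \<in> {c, d}" "\<forall>x\<in>{a'<..<b'}. f x \<notin> {c, d}"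
    using assms(1,2) unfolding minimal_preimage_def by simp_all
  show "x \<in> {a, b}"
  proof (rule ccontr)
    assume "x \<notin> {a, b}"
    with x have "a < x" "x < b" by auto
    with ab(3) ab' have "x \<noteq> a'" "x \<noteq> b'" by auto
    with x have "a' < x" "x < b'" by auto
    have "\<not> (a < a' \<and> a' < b)" "\<not> (a < b' \<and> b' < b)" using ab(3) ab'(1,2) by auto
    moreover have "\<not> (a' < a \<and> a < b')" "\<not> (a' < b \<and> b < b')" using ab'(3) ab(1,2) by auto
    ultimately have "a' = a" "b' = b" using \<open>a < x\<close> \<open>x < b\<close> \<open>a' < x\<close> \<open>x < b'\<close> by linarith+
    with assms(3) show False by simp
  qed
qed

lemma minimal_preimage_chain:
  fixes f :: "real \<Rightarrow> real" and U :: "nat \<Rightarrow> real set"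
  assumes "\<And>k. connected (U k)" "\<And>k. continuous_on (U k) f" "\<And>k. f ` U (Suc k) = U k"
    and "c0 < d0" "{c0..d0} \<subseteq> U 0"
  obtains c d where "\<And>k. c k < d k" "\<And>k. {c k..d k} \<subseteq> U k"
    "\<And>k. minimal_preimage f (c k) (d k) (c (Suc k)) (d (Suc k))"
proof -
  define P where "P k w \<longleftrightarrow> fst w < snd w \<and> {fst w..snd w} \<subseteq> U k" for k w
  have step: "\<exists>w'. P (Suc k) w' \<and> minimal_preimage f (fst w) (snd w) (fst w') (snd w')"
    if "P k w" for k w
  proof -
    have "fst w < snd w" "{fst w..snd w} \<subseteq> f ` U (Suc k)"
      using that assms(3) unfolding P_def by simp_all
    then obtain a b where "a \<in> U (Suc k)" "b \<in> U (Suc k)" and ab: "minimal_preimage f (fst w) (snd w) a b"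
      by (rule minimal_preimage_exists[OF assms(1,2)])
    then have "{a..b} \<subseteq> U (Suc k)" by (intro connected_contains_Icc assms(1))
    then have "P (Suc k) (a, b)" using ab unfolding P_def minimal_preimage_def by simp
    with ab show ?thesis by auto
  qed
  have "P 0 (c0, d0)" using assms(4,5) unfolding P_def by simp
  then obtain W where W: "\<And>k. P k (W k)"
    "\<And>k. minimal_preimage f (fst (W k)) (snd (W k)) (fst (W (Suc k))) (snd (W (Suc k)))"
    using dependent_nat_choice[of P "\<lambda>_ w w'. minimal_preimage f (fst w) (snd w) (fst w') (snd w')",
        OF exI step] by blast
  show thesis
  proof (rule that)
    show "fst (W k) < snd (W k)" "{fst (W k)..snd (W k)} \<subseteq> U k" for k
      using W(1)[of k] unfolding P_def by simp_all
  qed (fact W(2))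
qed

definition has_splitting_interval :: "(real \<Rightarrow> real) \<Rightarrow> real \<Rightarrow> real \<Rightarrow> bool" where
  "has_splitting_interval g l r \<longleftrightarrow>
     (\<exists>a b. a < b \<and> {a..b} \<subseteq> {0..1} \<and> {a..b} \<inter> {l..r} \<subseteq> {l, r} \<and> g ` {a..b} = g ` {l..r})"

lemma splitting_sequence_iff:
  "splitting_sequence g l r \<longleftrightarrow> tight g l r \<and> infinite {n. has_splitting_interval g (l n) (r n)}"
proof -
  have "(\<exists>N. infinite N \<and> (\<forall>n\<in>N. P n)) \<longleftrightarrow> infinite {n. P n}" for P :: "nat \<Rightarrow> bool"
  proof
    show "\<exists>N. infinite N \<and> (\<forall>n\<in>N. P n) \<Longrightarrow> infinite {n. P n}"
      using infinite_super[of _ "{n. P n}"] by blast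
  qed auto
  then show ?thesis unfolding splitting_sequence_def has_splitting_interval_def by simp
qed

lemma has_splitting_interval_comp:
  "has_splitting_interval g l r \<Longrightarrow> has_splitting_interval (h \<circ> g) l r"
  unfolding has_splitting_interval_def by (metis image_comp)

lemma infinite_residue_class:
  fixes N :: "nat set"
  assumes "infinite N" "0 < m"
  obtains p where "p < m" "infinite {k. m * k + p \<in> N}"
proof -
  have "N \<subseteq> (\<Union>p<m. (\<lambda>k. m * k + p) ` {k. m * k + p \<in> N})"
  proof
    fix n assume "n \<in> N"
    moreover have "n = m * (n div m) + n mod m" by simp
    ultimately have "n \<in> (\<lambda>k. m * k + n mod m) ` {k. m * k + n mod m \<in> N}"
      by (intro image_eqI[of _ _ "n div m"]) simp_all
    moreover have "n mod m < m" using assms(2) by simp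
    ultimately show "n \<in> (\<Union>p<m. (\<lambda>k. m * k + p) ` {k. m * k + p \<in> N})" by blast
  qed
  with assms(1) have "\<exists>p<m. infinite {k. m * k + p \<in> N}"
    using finite_subset by blast
  with that show thesis by blast
qed

lemma infinite_Collect_at_doubled_index:
  assumes "infinite {n. P n}" and "\<And>j. P (Suc j) \<Longrightarrow> Q (2 * j + 1) \<or> Q (2 * j + 2)"
  shows "infinite {k. Q k}"
  unfolding infinite_nat_iff_unbounded_le
proof
  fix M
  obtain n where "n \<ge> Suc M" "P n"
    using assms(1) unfolding infinite_nat_iff_unbounded_le by blast
  then obtain j where "M \<le> j" "P (Suc j)" by (cases n) auto
  from this(2) have "Q (2 * j + 1) \<or> Q (2 * j + 2)" by (rule assms(2))
  moreover have "M \<le> 2 * j + 1" "M \<le> 2 * j + 2" using \<open>M \<le> j\<close> by simp_all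
  ultimately show "\<exists>k\<ge>M. k \<in> {k. Q k}" by blast
qed

lemma tight_compose_self_every_other:
  assumes "tight f l r"
  shows "tight (f \<circ> f) (\<lambda>k. l (2 * k + p)) (\<lambda>k. r (2 * k + p))"
proof -
  have "(f \<circ> f) ` {l (2 * Suc k + p)..r (2 * Suc k + p)} = {l (2 * k + p)..r (2 * k + p)}" for k
  proof -
    have image: "f ` {l (Suc n)..r (Suc n)} = {l n..r n}" for n
      using assms unfolding tight_def by blast
    have "2 * Suc k + p = Suc (Suc (2 * k + p))" by simp
    then show ?thesis by (simp only: image_comp[symmetric] image)
  qed
  moreover obtain m where "\<forall>n\<ge>m. l n < r n" using assms unfolding tight_def by blast
  then have "\<forall>k\<ge>m. l (2 * k + p) < r (2 * k + p)" by simp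
  ultimately show ?thesis using assms unfolding tight_def by blast
qed

lemma admits_splitting_sequence_compose_self:
  assumes "admits_splitting_sequence f"
  shows "admits_splitting_sequence (f \<circ> f)"
proof -
  obtain l r where "tight f l r" and splitting: "infinite {n. has_splitting_interval f (l n) (r n)}"
    using assms unfolding admits_splitting_sequence_def splitting_sequence_iff by blast
  obtain p where "infinite {k. 2 * k + p \<in> {n. has_splitting_interval f (l n) (r n)}}"
    using infinite_residue_class[OF splitting, of 2] by auto
  then have "infinite {k. has_splitting_interval f (l (2 * k + p)) (r (2 * k + p))}" by simp
  then have "infinite {k. has_splitting_interval (f \<circ> f) (l (2 * k + p)) (r (2 * k + p))}"
    by (rule infinite_super[rotated]) (use has_splitting_interval_comp in blast)
  with tight_compose_self_every_other[OF \<open>tight f l r\<close>] show ?thesis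
    unfolding admits_splitting_sequence_def splitting_sequence_iff by blast
qed

lemma splitting_sequence_nondegenerate:
  assumes "splitting_sequence g l r"
  obtains l' r' where "splitting_sequence g l' r'" "\<And>n. l' n < r' n"
proof -
  have "tight g l r" and splitting: "infinite {n. has_splitting_interval g (l n) (r n)}"
    using assms unfolding splitting_sequence_iff by simp_all
  then obtain m where m: "\<And>n. l (n + m) < r (n + m)"
    unfolding tight_def by (metis le_add2)
  have "tight g (\<lambda>n. l (n + m)) (\<lambda>n. r (n + m))"
    using \<open>tight g l r\<close> m unfolding tight_def by simp
  moreover have "infinite {n. has_splitting_interval g (l (n + m)) (r (n + m))}"
    unfolding infinite_nat_iff_unbounded_le
  proof
    fix k
    obtain n where "n \<ge> k + m" "has_splitting_interval g (l n) (r n)"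
      using splitting unfolding infinite_nat_iff_unbounded_le by blast
    then show "\<exists>n'\<ge>k. n' \<in> {n. has_splitting_interval g (l (n + m)) (r (n + m))}"
      by (intro exI[of _ "n - m"]) simp
  qed
  ultimately show thesis
    using m by (intro that[of "\<lambda>n. l (n + m)" "\<lambda>n. r (n + m)"]) (simp_all add: splitting_sequence_iff)
qed

lemma tight_minimal_preimage_chain_of_compose_self:
  fixes f :: "real \<Rightarrow> real"
  assumes cont: "continuous_on {0..1} f" and surj: "f ` {0..1} = {0..1}"
    and "tight (f \<circ> f) l r" and nondegenerate: "\<And>n. l n < r n"
  obtains c d where "tight f c d" "\<And>k. c k < d k" "\<And>j. {c (2 * j)..d (2 * j)} \<subseteq> {l j..r j}"
    "\<And>k. minimal_preimage f (c k) (d k) (c (Suc k)) (d (Suc k))"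
proof -
  define T where "T n = {l n..r n}" for n
  have T: "f ` f ` T (Suc n) = T n" "T n \<subseteq> {0..1}" "T n \<noteq> {0..1}" for n
    using \<open>tight (f \<circ> f) l r\<close> unfolding T_def tight_def proper_closed_subinterval_def
    by (simp_all add: image_comp)
  define U where "U k = (if even k then T (k div 2) else f ` T (Suc (k div 2)))" for k
  have U_image: "f ` U (Suc k) = U k" for k
    using T(1) unfolding U_def by (cases "even k") simp_all
  have "f ` T n \<subseteq> {0..1}" "f ` T (Suc n) \<noteq> {0..1}" for n
    using T(1,2,3)[of n] surj by (metis image_mono)+
  then have U01: "U k \<subseteq> {0..1}" "U k \<noteq> {0..1}" for k
    using T unfolding U_def by simp_all
  have "connected (T n)" "continuous_on (T n) f" for n
    using cont T(2) unfolding T_def by (simp_all add: continuous_on_subset)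
  then have U_connected: "connected (U k)" for k
    unfolding U_def by (simp add: connected_continuous_image)
  have U_cont: "continuous_on (U k) f" for k using cont U01(1) by (rule continuous_on_subset)
  have U0: "{l 0..r 0} \<subseteq> U 0" unfolding U_def T_def by simp
  obtain c d where cd: "\<And>k. c k < d k" "\<And>k. {c k..d k} \<subseteq> U k"
    and chain: "\<And>k. minimal_preimage f (c k) (d k) (c (Suc k)) (d (Suc k))"
    using minimal_preimage_chain[OF U_connected U_cont U_image nondegenerate[of 0] U0] by blast
  have "tight f c d"
    unfolding tight_def proper_closed_subinterval_def
  proof (intro conjI allI)
    fix n
    show "c n \<le> d n" using cd(1)[of n] by simp
    show "{c n..d n} \<subseteq> {0..1}" using cd(2)[of n] U01(1)[of n] by (rule order_trans)
    show "{c n..d n} \<noteq> {0..1}" using cd(2)[of n] U01[of n] by (metis subset_antisym)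
    show "f ` {c (Suc n)..d (Suc n)} = {c n..d n}" using chain[of n] unfolding minimal_preimage_def by simp
  qed (use cd(1) in blast)
  moreover have "{c (2 * j)..d (2 * j)} \<subseteq> {l j..r j}" for j
    using cd(2)[of "2 * j"] unfolding U_def T_def by simp
  ultimately show thesis using that cd(1) chain by blast
qed

lemma has_splitting_interval_at_one_of_two_preimages:
  fixes f :: "real \<Rightarrow> real"
  assumes cont: "continuous_on {0..1} f" and maps: "f ` {0..1} \<subseteq> {0..1}"
    and "c0 < d0" and mp1: "minimal_preimage f c0 d0 c1 d1" and mp2: "minimal_preimage f c1 d1 c2 d2"
    and "{c2..d2} \<subseteq> {l..r}"
    and S: "{a..b} \<subseteq> {0..1}" "{a..b} \<inter> {l..r} \<subseteq> {l, r}" "{c0..d0} \<subseteq> f ` f ` {a..b}"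
  shows "has_splitting_interval f c1 d1 \<or> has_splitting_interval f c2 d2"
proof -
  have "continuous_on {a..b} f" using cont S(1) by (rule continuous_on_subset)
  then have "connected (f ` {a..b})" by (rule connected_continuous_image) simp
  moreover have "continuous_on (f ` {a..b}) f" using cont maps S(1) by (blast intro: continuous_on_subset)
  ultimately obtain z1 z2 where z: "z1 \<in> f ` {a..b}" "z2 \<in> f ` {a..b}" "minimal_preimage f c0 d0 z1 z2"
    using minimal_preimage_exists \<open>c0 < d0\<close> S(3) by blast
  show ?thesis
  proof (cases "(z1, z2) = (c1, d1)")
    case True
    have "{c1..d1} \<subseteq> f ` {a..b}"
      using True z \<open>connected (f ` {a..b})\<close> connected_contains_Icc by blast
    moreover have "c1 < d1" using mp1 unfolding minimal_preimage_def by simp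
    ultimately obtain s1 s2 where "s1 \<in> {a..b}" "s2 \<in> {a..b}" "minimal_preimage f c1 d1 s1 s2"
      using minimal_preimage_exists[OF connected_Icc \<open>continuous_on {a..b} f\<close>] by blast
    then have s: "{s1..s2} \<subseteq> {a..b}" by auto
    have "c2 < d2" using mp2 unfolding minimal_preimage_def by simp
    with \<open>{c2..d2} \<subseteq> {l..r}\<close> have "l \<le> c2" "d2 \<le> r" by auto
    with s S(2) have "{s1..s2} \<inter> {c2..d2} \<subseteq> {c2, d2}" by fastforce
    moreover have "{s1..s2} \<subseteq> {0..1}" using s S(1) by blast
    moreover have "f ` {s1..s2} = f ` {c2..d2}" "s1 < s2"
      using \<open>minimal_preimage f c1 d1 s1 s2\<close> mp2 unfolding minimal_preimage_def by simp_all
    ultimately show ?thesis unfolding has_splitting_interval_def by blast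
  next
    case False
    have "{z1..z2} \<subseteq> f ` {a..b}"
      using z \<open>connected (f ` {a..b})\<close> connected_contains_Icc by blast
    then have "{z1..z2} \<subseteq> {0..1}" using maps S(1) by blast
    moreover have "{z1..z2} \<inter> {c1..d1} \<subseteq> {c1, d1}"
      using minimal_preimages_Int_subset[OF mp1 z(3) False] .
    moreover have "f ` {z1..z2} = f ` {c1..d1}" "z1 < z2"
      using z(3) mp1 unfolding minimal_preimage_def by simp_all
    ultimately show ?thesis unfolding has_splitting_interval_def by blast
  qed
qed

lemma admits_splitting_sequence_of_compose_self:
  fixes f :: "real \<Rightarrow> real"
  assumes cont: "continuous_on {0..1} f" and surj: "f ` {0..1} = {0..1}"
    and "admits_splitting_sequence (f \<circ> f)"
  shows "admits_splitting_sequence f"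
proof -
  obtain l r where "splitting_sequence (f \<circ> f) l r" and nondegenerate: "\<And>n. l n < r n"
    using assms(3) splitting_sequence_nondegenerate unfolding admits_splitting_sequence_def by metis
  then have "tight (f \<circ> f) l r"
    and splitting: "infinite {n. has_splitting_interval (f \<circ> f) (l n) (r n)}"
    unfolding splitting_sequence_iff by simp_all
  obtain c d where "tight f c d" and c_less_d: "\<And>k. c k < d k"
    and within: "\<And>j. {c (2 * j)..d (2 * j)} \<subseteq> {l j..r j}" and chain: "\<And>k. minimal_preimage f (c k) (d k) (c (Suc k)) (d (Suc k))"
    using tight_minimal_preimage_chain_of_compose_self[OF cont surj \<open>tight (f \<circ> f) l r\<close> nondegenerate]
    by blast
  have split_step: "has_splitting_interval f (c (2 * j + 1)) (d (2 * j + 1)) \<or>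
      has_splitting_interval f (c (2 * j + 2)) (d (2 * j + 2))"
    if split: "has_splitting_interval (f \<circ> f) (l (Suc j)) (r (Suc j))" for j
  proof -
    obtain a b where S: "{a..b} \<subseteq> {0..1}" "{a..b} \<inter> {l (Suc j)..r (Suc j)} \<subseteq> {l (Suc j), r (Suc j)}"
      and "(f \<circ> f) ` {a..b} = (f \<circ> f) ` {l (Suc j)..r (Suc j)}"
      using split unfolding has_splitting_interval_def by (elim exE conjE) (rule that)
    then have "{c (2 * j)..d (2 * j)} \<subseteq> f ` f ` {a..b}"
      using within[of j] \<open>tight (f \<circ> f) l r\<close> unfolding tight_def by (simp add: image_comp)
    moreover have "{c (2 * j + 2)..d (2 * j + 2)} \<subseteq> {l (Suc j)..r (Suc j)}"
      using within[of "Suc j"] by simp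
    moreover have "f ` {0..1} \<subseteq> {0..1}" using surj by simp
    ultimately show ?thesis
      using has_splitting_interval_at_one_of_two_preimages[OF cont _ c_less_d[of "2 * j"]
          chain[of "2 * j"] _ _ S] chain[of "2 * j + 1"]
      by simp
  qed
  have "infinite {k. has_splitting_interval f (c k) (d k)}"
    using splitting split_step by (rule infinite_Collect_at_doubled_index)
  with \<open>tight f c d\<close> show ?thesis
    unfolding admits_splitting_sequence_def splitting_sequence_iff by blast
qed

theorem lemma3p15:
  fixes f :: "real \<Rightarrow> real"
  assumes "continuous_on {0..1} f"
    and "f ` {0..1} = {0..1}"
  shows "admits_splitting_sequence f \<longleftrightarrow> admits_splitting_sequence (f \<circ> f)"
  using admits_splitting_sequence_compose_self admits_splitting_sequence_of_compose_self[OF assms]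
  by blast

end
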